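(* Assume that the basis of canonical cycles $(b_1,b_2,a_1,a_2)$ satisfying $a_1^{\mu}=a_2$, $b_1^{\mu}=b_2$ is transformed by a matrix $T\in \mathrm{Sp}(4,\mathbb{Z})$ to another basis $(b'_1,b'_2,a'_1,a'_2)$ satisfying the same relation: $a_1'^{\mu}=a_2'$, $b_1'^{\mu}=b_2'$. Then the action of the matrix $T$ on the matrix of $b$-periods $\mathbf{B}=\frac{1}{2}\begin{pmatrix}\mathbf{x}+\mathbf{y} & \mathbf{x}-\mathbf{y}\\ \mathbf{x}-\mathbf{y} & \mathbf{x}+\mathbf{y}\end{pmatrix}$ gives rise to an action of two elements $\gamma_1,\gamma_2\in\Gamma$, such that $\gamma_1\gamma_2^{-1}\in\Gamma(2)$, on $\mathbf{x}$ and $\mathbf{y}$, respectively. The matrix $T$ is expressed in terms of $\gamma_{1,2}$ as follows: if $\gamma_i=\begin{pmatrix} k_i & l_i\\ m_i & n_i\end{pmatrix}$, $i=1,2$, then $$T=\frac{1}{2}\begin{pmatrix} k_1+k_2 & k_1-k_2 & l_1+l_2 & l_1-l_2\\ k_1-k_2 & k_1+k_2 & l_1-l_2 & l_1+l_2\\ m_1+m_2 & m_1-m_2 & n_1+n_2 & n_1-n_2\\ m_1-m_2 & m_1+m_2 & n_1-n_2 & n_1+n_2\end{pmatrix}.$$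
   Context: Consider a genus two curve $y^2=(z^2-1)(z^2-r_1^2)(z^2-r_2^2)$, $r_1,r_2\in\mathbb{C}$, which besides the hyperelliptic involution admits the involution $\mu: z\mapsto -z$. A canonical basis of cycles $(b_1,b_2,a_1,a_2)$ is chosen so that $a_1^{\mu}=a_2$, $b_1^{\mu}=b_2$ (superscript $\mu$ denotes the image of a cycle under $\mu$); in such a basis the matrix of $b$-periods has the form $\mathbf{B}=\frac{1}{2}\begin{pmatrix}\mathbf{x}+\mathbf{y} & \mathbf{x}-\mathbf{y}\\ \mathbf{x}-\mathbf{y} & \mathbf{x}+\mathbf{y}\end{pmatrix}$ with $\mathbf{x},\mathbf{y}$ in the upper half-plane. A matrix $T=\begin{pmatrix}A&B\\C&D\end{pmatrix}\in\mathrm{Sp}(4,\mathbb{Z})$ acting on the vector $(b_1,b_2,a_1,a_2)^t$ acts on the matrix of $b$-periods by $\mathbf{B}\mapsto (A\mathbf{B}+B)(C\mathbf{B}+D)^{-1}$; elements of $\Gamma$ act on the upper half-plane by Möbius transformations. Here $\Gamma=SL(2,\mathbb{Z})$ and $\Gamma(2)$ is the principal congruence subgroup of $\Gamma$ consisting of matrices $\gamma\equiv I \pmod 2$. *)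

theory Defs
  imports "HOL-Analysis.Analysis"
begin

text \<open>Indices: type 4 = {0,1,2,3} indexes (b1,b2,a1,a2); type 2 = {0,1}.\<close>

definition hi4 :: "4 \<Rightarrow> bool" where
  "hi4 i \<longleftrightarrow> i = 2 \<or> i = 3"

definition lo4 :: "4 \<Rightarrow> 2" where
  "lo4 i = (if i = 0 \<or> i = 2 then 0 else 1)"

definition block4 :: "'a^2^2 \<Rightarrow> 'a^2^2 \<Rightarrow> 'a^2^2 \<Rightarrow> 'a^2^2 \<Rightarrow> 'a^4^4" where
  "block4 A B C D = (\<chi> i j. (if hi4 i then (if hi4 j then D else C)
                                   else (if hi4 j then B else A)) $ lo4 i $ lo4 j)"

definition blkA :: "'a^4^4 \<Rightarrow> 'a^2^2" where "blkA T = (\<chi> i j. T $ (if i = 0 then 0 else 1) $ (if j = 0 then 0 else 1))"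
definition blkB :: "'a^4^4 \<Rightarrow> 'a^2^2" where "blkB T = (\<chi> i j. T $ (if i = 0 then 0 else 1) $ (if j = 0 then 2 else 3))"
definition blkC :: "'a^4^4 \<Rightarrow> 'a^2^2" where "blkC T = (\<chi> i j. T $ (if i = 0 then 2 else 3) $ (if j = 0 then 0 else 1))"
definition blkD :: "'a^4^4 \<Rightarrow> 'a^2^2" where "blkD T = (\<chi> i j. T $ (if i = 0 then 2 else 3) $ (if j = 0 then 2 else 3))"

definition J4 :: "int^4^4" where
  "J4 = block4 0 (mat 1) (- mat 1) 0"

definition Sp4Z :: "(int^4^4) set" where
  "Sp4Z = {T. transpose T ** J4 ** T = J4}"

text \<open>The involution mu on cycles, in coordinates w.r.t. the basis (b1,b2,a1,a2):
  it swaps b1 <-> b2 and a1 <-> a2.\<close>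
definition sw4 :: "4 \<Rightarrow> 4" where
  "sw4 i = (if i = 0 then 1 else if i = 1 then 0 else if i = 2 then 3 else 2)"

definition mu_cyc :: "int^4 \<Rightarrow> int^4" where
  "mu_cyc v = (\<chi> i. v $ sw4 i)"

definition SL2Z :: "(int^2^2) set" where
  "SL2Z = {g. det g = 1}"

definition Gamma2 :: "(int^2^2) set" where
  "Gamma2 = {g. g \<in> SL2Z \<and> (\<forall>i j. even (g $ i $ j - mat 1 $ i $ j))}"

definition moeb :: "int^2^2 \<Rightarrow> complex \<Rightarrow> complex" where
  "moeb g z = (of_int (g$0$0) * z + of_int (g$0$1)) / (of_int (g$1$0) * z + of_int (g$1$1))"

definition cmat :: "int^'n^'m \<Rightarrow> complex^'n^'m" where
  "cmat M = (\<chi> i j. of_int (M $ i $ j))"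

definition Bmat :: "complex \<Rightarrow> complex \<Rightarrow> complex^2^2" where
  "Bmat x y = (\<chi> i j. (if i = j then x + y else x - y) / 2)"

definition sp_act :: "int^4^4 \<Rightarrow> complex^2^2 \<Rightarrow> complex^2^2" where
  "sp_act T P = (cmat (blkA T) ** P + cmat (blkB T)) ** matrix_inv (cmat (blkC T) ** P + cmat (blkD T))"

text \<open>Twice the matrix T in the statement (entries k1+k2, k1-k2, ...).\<close>
definition sym2 :: "int \<Rightarrow> int \<Rightarrow> int^2^2" where
  "sym2 u v = (\<chi> i j. if i = j then u + v else u - v)"

definition Tdouble :: "int^2^2 \<Rightarrow> int^2^2 \<Rightarrow> int^4^4" where
  "Tdouble g1 g2 = block4 (sym2 (g1$0$0) (g2$0$0)) (sym2 (g1$0$1) (g2$0$1))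
                          (sym2 (g1$1$0) (g2$1$0)) (sym2 (g1$1$1) (g2$1$1))"

end

theory Submission
  imports Defs
begin

text \<open>A change of basis \<open>T\<close> compatible with \<open>\<mu>\<close> preserves the \<open>\<pm>1\<close>-eigenspaces of
  \<open>\<mu>\<close>, spanned by \<open>b\<^sub>1 \<pm> b\<^sub>2, a\<^sub>1 \<pm> a\<^sub>2\<close>, so it splits into two integral
  \<open>2\<times>2\<close> blocks \<open>\<gamma>\<^sub>1, \<gamma>\<^sub>2\<close> whose entries are sums and differences of entries of \<open>T\<close>;
  in particular \<open>\<gamma>\<^sub>1 \<equiv> \<gamma>\<^sub>2 (mod 2)\<close>. The symplectic relation for \<open>T\<close> amounts to
  \<open>det \<gamma>\<^sub>1 = det \<gamma>\<^sub>2 = 1\<close>. The four blocks of \<open>T\<close> and the period matrix all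
  have the shape \<open>Bmat p q\<close>, and \<open>Bmat\<close> is a ring homomorphism from \<open>\<complex> \<times> \<complex>\<close>,
  so the action of \<open>T\<close> is computed componentwise and becomes the pair of Moebius
  transformations by \<open>\<gamma>\<^sub>1\<close> on \<open>x\<close> and \<open>\<gamma>\<^sub>2\<close> on \<open>y\<close>.\<close>

lemma UNIV_2_0: "(UNIV::2 set) = {0, 1}"
  using UNIV_2 by auto

lemma UNIV_4_0: "(UNIV::4 set) = {0, 1, 2, 3}"
  using UNIV_4 by auto

lemma all_UNIV_2: "(\<forall>i::2. P i) \<longleftrightarrow> P 0 \<and> P 1"
  by (metis UNIV_2_0 UNIV_I empty_iff insert_iff)

lemma sum_UNIV_2: "sum f (UNIV::2 set) = f 0 + f 1"
  unfolding UNIV_2_0 by simp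

lemma all_UNIV_4: "(\<forall>i::4. P i) \<longleftrightarrow> P 0 \<and> P 1 \<and> P 2 \<and> P 3"
  by (metis UNIV_4_0 UNIV_I empty_iff insert_iff)

lemma sum_UNIV_4: "sum f (UNIV::4 set) = f 0 + f 1 + f 2 + f 3"
  unfolding UNIV_4_0 by (simp add: ac_simps)

lemma matrix2_eq_iff:
  "(A::'a^2^2) = B \<longleftrightarrow> A$0$0 = B$0$0 \<and> A$0$1 = B$0$1 \<and> A$1$0 = B$1$0 \<and> A$1$1 = B$1$1"
  by (auto simp: vec_eq_iff all_UNIV_2)

lemma det_2_entries: "det (A::'a::comm_ring_1^2^2) = A$0$0 * A$1$1 - A$0$1 * A$1$0"
proof -
  have two: "(2::2) = 0" by simp
  show ?thesis using det_2[of A] unfolding two by simp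
qed

lemma matrix_inv_eqI:
  fixes A B :: "'a::semiring_1^'n^'n"
  assumes "A ** B = mat 1" "B ** A = mat 1"
  shows "matrix_inv A = B"
  unfolding matrix_inv_def
proof (rule some_equality)
  fix X assume X: "A ** X = mat 1 \<and> X ** A = mat 1"
  have "X = X ** (A ** B)"
    using assms by (simp add: matrix_mul_rid)
  also have "\<dots> = (X ** A) ** B"
    by (simp add: matrix_mul_assoc)
  finally show "X = B"
    using X by (simp add: matrix_mul_lid)
qed (use assms in simp)

definition mat2 :: "'a \<Rightarrow> 'a \<Rightarrow> 'a \<Rightarrow> 'a \<Rightarrow> 'a^2^2" where
  "mat2 k l m n = (\<chi> i j. if i = 0 then (if j = 0 then k else l) else (if j = 0 then m else n))"

lemma mat2_nth [simp]:
  "mat2 k l m n $ 0 $ 0 = k" "mat2 k l m n $ 0 $ 1 = l"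
  "mat2 k l m n $ 1 $ 0 = m" "mat2 k l m n $ 1 $ 1 = n"
  by (simp_all add: mat2_def)

lemma SL2Z_matrix_inv:
  assumes "g \<in> SL2Z"
  shows "matrix_inv g = mat2 (g$1$1) (- g$0$1) (- g$1$0) (g$0$0)"
  using assms
  by (intro matrix_inv_eqI)
     (auto simp: SL2Z_def det_2_entries matrix2_eq_iff matrix_matrix_mult_def sum_UNIV_2
                 mat_def algebra_simps)

lemma mult_matrix_inv_in_Gamma2:
  assumes "g1 \<in> SL2Z" "g2 \<in> SL2Z" and "\<And>i j. even (g1$i$j - g2$i$j)"
  shows "g1 ** matrix_inv g2 \<in> Gamma2"
proof -
  define h where "h = matrix_inv g2"
  have "det h = 1"
    using assms(2) by (simp add: h_def SL2Z_matrix_inv SL2Z_def det_2_entries mult.commute)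
  then have det: "det (g1 ** h) = 1"
    using assms(1) by (simp add: SL2Z_def det_mul)
  have "g1 ** h - mat 1 = (g1 - g2) ** h"
    using assms(2) by (simp add: h_def SL2Z_matrix_inv matrix2_eq_iff matrix_matrix_mult_def
        sum_UNIV_2 mat_def SL2Z_def det_2_entries algebra_simps)
  moreover have "even (((g1 - g2) ** h) $ i $ j)" for i j
    unfolding matrix_matrix_mult_def vec_lambda_beta vector_minus_component
    by (intro dvd_sum dvd_mult2 assms(3))
  ultimately have "even ((g1 ** h) $ i $ j - mat 1 $ i $ j)" for i j
    by (metis vector_minus_component)
  with det show ?thesis
    by (simp add: Gamma2_def SL2Z_def h_def)
qed

lemma moeb_denominator_nonzero:
  assumes "g \<in> SL2Z" and "Im z > 0"
  shows "of_int (g$1$0) * z + of_int (g$1$1) \<noteq> 0"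
proof
  assume zero: "of_int (g$1$0) * z + of_int (g$1$1) = 0"
  then have "Im (of_int (g$1$0) * z + of_int (g$1$1)) = 0"
    by simp
  then have "g$1$0 = 0"
    using assms(2) by simp
  with zero assms(1) show False
    by (simp add: SL2Z_def det_2_entries)
qed

lemma Bmat_mult: "Bmat p q ** Bmat r s = Bmat (p * r) (q * s)"
  by (simp add: matrix2_eq_iff matrix_matrix_mult_def sum_UNIV_2 Bmat_def field_simps)

lemma Bmat_add: "Bmat p q + Bmat r s = Bmat (p + r) (q + s)"
  by (simp add: matrix2_eq_iff Bmat_def field_simps)

lemma Bmat_one: "Bmat 1 1 = mat 1"
  by (simp add: matrix2_eq_iff Bmat_def mat_def)

lemma Bmat_invertible:
  assumes "p \<noteq> 0" "q \<noteq> 0"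
  shows "invertible (Bmat p q)" and "matrix_inv (Bmat p q) = Bmat (1 / p) (1 / q)"
proof -
  have "Bmat p q ** Bmat (1 / p) (1 / q) = mat 1" "Bmat (1 / p) (1 / q) ** Bmat p q = mat 1"
    using assms by (simp_all add: Bmat_mult Bmat_one)
  then show "invertible (Bmat p q)" "matrix_inv (Bmat p q) = Bmat (1 / p) (1 / q)"
    unfolding invertible_def by (auto intro: matrix_inv_eqI)
qed

lemma sp_act_Bmat:
  assumes "cmat (blkA T) = Bmat a1 a2" "cmat (blkB T) = Bmat b1 b2"
    and "cmat (blkC T) = Bmat c1 c2" "cmat (blkD T) = Bmat d1 d2"
    and "c1 * x + d1 \<noteq> 0" "c2 * y + d2 \<noteq> 0"
  shows "invertible (cmat (blkC T) ** Bmat x y + cmat (blkD T))"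
    and "sp_act T (Bmat x y) = Bmat ((a1 * x + b1) / (c1 * x + d1)) ((a2 * y + b2) / (c2 * y + d2))"
proof -
  have denom: "cmat (blkC T) ** Bmat x y + cmat (blkD T) = Bmat (c1 * x + d1) (c2 * y + d2)"
    using assms(3,4) by (simp add: Bmat_mult Bmat_add)
  then show "invertible (cmat (blkC T) ** Bmat x y + cmat (blkD T))"
    using assms(5,6) by (simp add: Bmat_invertible)
  show "sp_act T (Bmat x y) = Bmat ((a1 * x + b1) / (c1 * x + d1)) ((a2 * y + b2) / (c2 * y + d2))"
    using assms(1,2,5,6) by (simp add: sp_act_def denom Bmat_invertible Bmat_mult Bmat_add)
qed

lemma mu_cyc_eq_iff: "mu_cyc u = v \<longleftrightarrow> v$0 = u$1 \<and> v$1 = u$0 \<and> v$2 = u$3 \<and> v$3 = u$2"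
  by (auto simp: vec_eq_iff all_UNIV_4 mu_cyc_def sw4_def)

lemma mu_compatible_rows:
  assumes "mu_cyc (T $ 0) = T $ 1" "mu_cyc (T $ 2) = T $ 3"
  shows "T$1$0 = T$0$1" "T$1$1 = T$0$0" "T$1$2 = T$0$3" "T$1$3 = T$0$2"
    "T$3$0 = T$2$1" "T$3$1 = T$2$0" "T$3$2 = T$2$3" "T$3$3 = T$2$2"
  using assms by (simp_all add: mu_cyc_eq_iff)

lemma symplectic_form_nth:
  fixes T :: "int^4^4"
  shows "(transpose T ** J4 ** T) $ i $ j =
    T$0$i * T$2$j - T$2$i * T$0$j + T$1$i * T$3$j - T$3$i * T$1$j"
  by (simp add: matrix_matrix_mult_def transpose_def sum_UNIV_4 J4_def block4_def hi4_def lo4_def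
      mat_def algebra_simps)

lemma J4_nth: "J4 $ 0 $ 2 = 1" "J4 $ 1 $ 2 = 0"
  by (simp_all add: J4_def block4_def hi4_def lo4_def mat_def)

text \<open>Since \<open>T\<close> commutes with \<open>\<mu>\<close>, it maps the \<open>\<mu>\<close>-invariant cycles
  \<open>b\<^sub>1 + b\<^sub>2, a\<^sub>1 + a\<^sub>2\<close> and the anti-invariant ones
  \<open>b\<^sub>1 - b\<^sub>2, a\<^sub>1 - a\<^sub>2\<close> among themselves; these are its matrices there.\<close>

definition plus_block :: "int^4^4 \<Rightarrow> int^2^2" where
  "plus_block T = mat2 (T$0$0 + T$0$1) (T$0$2 + T$0$3) (T$2$0 + T$2$1) (T$2$2 + T$2$3)"

definition minus_block :: "int^4^4 \<Rightarrow> int^2^2" where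
  "minus_block T = mat2 (T$0$0 - T$0$1) (T$0$2 - T$0$3) (T$2$0 - T$2$1) (T$2$2 - T$2$3)"

lemma even_plus_minus_block_diff: "even (plus_block T $ i $ j - minus_block T $ i $ j)"
proof -
  have "\<forall>i j. even (plus_block T $ i $ j - minus_block T $ i $ j)"
    unfolding all_UNIV_2 by (simp add: plus_block_def minus_block_def)
  then show ?thesis by blast
qed

lemma
  assumes "mu_cyc (T $ 0) = T $ 1" "mu_cyc (T $ 2) = T $ 3"
  shows Tdouble_plus_minus_block: "2 * T $ i $ j = Tdouble (plus_block T) (minus_block T) $ i $ j"
    and cmat_blkA_Bmat: "cmat (blkA T) = Bmat (of_int (plus_block T $ 0 $ 0)) (of_int (minus_block T $ 0 $ 0))"
    and cmat_blkB_Bmat: "cmat (blkB T) = Bmat (of_int (plus_block T $ 0 $ 1)) (of_int (minus_block T $ 0 $ 1))"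
    and cmat_blkC_Bmat: "cmat (blkC T) = Bmat (of_int (plus_block T $ 1 $ 0)) (of_int (minus_block T $ 1 $ 0))"
    and cmat_blkD_Bmat: "cmat (blkD T) = Bmat (of_int (plus_block T $ 1 $ 1)) (of_int (minus_block T $ 1 $ 1))"
proof -
  note rows = mu_compatible_rows[OF assms]
  have "\<forall>i j. 2 * T $ i $ j = Tdouble (plus_block T) (minus_block T) $ i $ j"
    unfolding all_UNIV_4
    by (simp add: rows Tdouble_def block4_def hi4_def lo4_def sym2_def plus_block_def minus_block_def)
  then show "2 * T $ i $ j = Tdouble (plus_block T) (minus_block T) $ i $ j"
    by blast
  show "cmat (blkA T) = Bmat (of_int (plus_block T $ 0 $ 0)) (of_int (minus_block T $ 0 $ 0))"
    "cmat (blkB T) = Bmat (of_int (plus_block T $ 0 $ 1)) (of_int (minus_block T $ 0 $ 1))"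
    "cmat (blkC T) = Bmat (of_int (plus_block T $ 1 $ 0)) (of_int (minus_block T $ 1 $ 0))"
    "cmat (blkD T) = Bmat (of_int (plus_block T $ 1 $ 1)) (of_int (minus_block T $ 1 $ 1))"
    by (simp_all add: matrix2_eq_iff rows cmat_def blkA_def blkB_def blkC_def blkD_def Bmat_def
        plus_block_def minus_block_def field_simps)
qed

lemma plus_minus_block_SL2Z:
  assumes "T \<in> Sp4Z" "mu_cyc (T $ 0) = T $ 1" "mu_cyc (T $ 2) = T $ 3"
  shows "plus_block T \<in> SL2Z" and "minus_block T \<in> SL2Z"
proof -
  note rows = mu_compatible_rows[OF assms(2,3)]
  have "transpose T ** J4 ** T = J4"
    using assms(1) by (simp add: Sp4Z_def)
  then have "(transpose T ** J4 ** T) $ 0 $ 2 = 1" "(transpose T ** J4 ** T) $ 1 $ 2 = 0"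
    by (simp_all add: J4_nth)
  then have "T$0$0 * T$2$2 - T$2$0 * T$0$2 + T$0$1 * T$2$3 - T$2$1 * T$0$3 = 1"
    "T$0$1 * T$2$2 - T$2$1 * T$0$2 + T$0$0 * T$2$3 - T$2$0 * T$0$3 = 0"
    by (simp_all add: symplectic_form_nth rows)
  then show "plus_block T \<in> SL2Z" "minus_block T \<in> SL2Z"
    by (simp_all add: SL2Z_def det_2_entries plus_block_def minus_block_def algebra_simps)
qed

theorem lemma1:
  fixes T :: "int^4^4"
  assumes "T \<in> Sp4Z"
    and "mu_cyc (T $ 0) = T $ 1"
    and "mu_cyc (T $ 2) = T $ 3"
  shows "\<exists>g1 g2. g1 \<in> SL2Z \<and> g2 \<in> SL2Z \<and> g1 ** matrix_inv g2 \<in> Gamma2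
     \<and> (\<forall>i j. 2 * T $ i $ j = Tdouble g1 g2 $ i $ j)
     \<and> (\<forall>x y. Im x > 0 \<longrightarrow> Im y > 0 \<longrightarrow>
           invertible (cmat (blkC T) ** Bmat x y + cmat (blkD T))
         \<and> sp_act T (Bmat x y) = Bmat (moeb g1 x) (moeb g2 y))"
proof (intro exI conjI allI impI)
  let ?g1 = "plus_block T" and ?g2 = "minus_block T"
  show SL: "?g1 \<in> SL2Z" "?g2 \<in> SL2Z"
    using plus_minus_block_SL2Z[OF assms] by auto
  then show "?g1 ** matrix_inv ?g2 \<in> Gamma2"
    using mult_matrix_inv_in_Gamma2 even_plus_minus_block_diff by blast
  show "2 * T $ i $ j = Tdouble ?g1 ?g2 $ i $ j" for i j
    using Tdouble_plus_minus_block[OF assms(2,3)] .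
  fix x y :: complex
  assume "Im x > 0" "Im y > 0"
  note sp = sp_act_Bmat[OF cmat_blkA_Bmat[OF assms(2,3)] cmat_blkB_Bmat[OF assms(2,3)]
      cmat_blkC_Bmat[OF assms(2,3)] cmat_blkD_Bmat[OF assms(2,3)]
      moeb_denominator_nonzero[OF SL(1) \<open>Im x > 0\<close>] moeb_denominator_nonzero[OF SL(2) \<open>Im y > 0\<close>]]
  show "invertible (cmat (blkC T) ** Bmat x y + cmat (blkD T))"
    using sp(1) .
  show "sp_act T (Bmat x y) = Bmat (moeb ?g1 x) (moeb ?g2 y)"
    using sp(2) by (simp add: moeb_def)
qed

end
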